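(* Let $H \subset L$ be light-cone regular and let $h_0$ be a minimal element of $H$ with respect to $\le$. Then $H' = H \setminus \{h_0\}$ is light-cone regular. In particular, if $h \in H$ satisfies $h_0 \le h$ and $h_0 \neq h$, then $d_{H'}(h) < d_H(h)$.
   Context: Let $L$ be a finitely generated $\mathbb{Z}$-module and $v_1,\dots,v_N\in L$ distinct elements linearly independent over $\mathbb{Z}_{\ge 0}$ (i.e. $\sum_i a_i v_i=0$ with all $a_i\in\mathbb{Z}_{\ge0}$ forces all $a_i=0$). Let $S=\{\sum_i a_iv_i : a_i\in\mathbb{Z}_{\ge0}\}$ and define the partial order $h_1\le h_2$ iff $h_1-h_2\in S$. A nonempty subset $H\subset L$ is light-cone regular if for every $h\in H$ the set $\{h'\in H: h'\le h\}$ is finite and $\{h'\in L: h'\ge h\}\subset H$. For a light-cone regular $H$ and $h\in H$, $d_H(h)=\#\{h'\in H \mid h'\le h\}$. *)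

theory Defs
  imports Main
begin

definition nsmul :: "nat \<Rightarrow> 'a::ab_group_add \<Rightarrow> 'a" where
  "nsmul k x = (((+) x) ^^ k) 0"

definition zsmul :: "int \<Rightarrow> 'a::ab_group_add \<Rightarrow> 'a" where
  "zsmul k x = (if k \<ge> 0 then nsmul (nat k) x else - nsmul (nat (- k)) x)"

definition fin_gen_Z_module :: "'a::ab_group_add itself \<Rightarrow> bool" where
  "fin_gen_Z_module _ \<longleftrightarrow>
     (\<exists>G::'a set. finite G \<and> (\<forall>x::'a. \<exists>c::'a \<Rightarrow> int. x = (\<Sum>g\<in>G. zsmul (c g) g)))"

definition pos_lin_indep :: "nat \<Rightarrow> (nat \<Rightarrow> 'a::ab_group_add) \<Rightarrow> bool" where
  "pos_lin_indep N v \<longleftrightarrow>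
     (\<forall>a::nat \<Rightarrow> nat. (\<Sum>i<N. nsmul (a i) (v i)) = 0 \<longrightarrow> (\<forall>i<N. a i = 0))"

definition cone :: "nat \<Rightarrow> (nat \<Rightarrow> 'a::ab_group_add) \<Rightarrow> 'a set" where
  "cone N v = {x. \<exists>a::nat \<Rightarrow> nat. x = (\<Sum>i<N. nsmul (a i) (v i))}"

definition lc_le :: "nat \<Rightarrow> (nat \<Rightarrow> 'a::ab_group_add) \<Rightarrow> 'a \<Rightarrow> 'a \<Rightarrow> bool" where
  "lc_le N v h1 h2 \<longleftrightarrow> h1 - h2 \<in> cone N v"

definition light_cone_regular :: "nat \<Rightarrow> (nat \<Rightarrow> 'a::ab_group_add) \<Rightarrow> 'a set \<Rightarrow> bool" where
  "light_cone_regular N v H \<longleftrightarrow>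
     H \<noteq> {} \<and>
     (\<forall>h\<in>H. finite {h'\<in>H. lc_le N v h' h}) \<and>
     (\<forall>h\<in>H. {h'. lc_le N v h h'} \<subseteq> H)"

definition dH :: "nat \<Rightarrow> (nat \<Rightarrow> 'a::ab_group_add) \<Rightarrow> 'a set \<Rightarrow> 'a \<Rightarrow> nat" where
  "dH N v H h = card {h'\<in>H. lc_le N v h' h}"

end

theory Submission
  imports Defs
begin

(* Removing a minimal element h0 cannot break upward closure, since no other element of H lies
   below it, and finiteness of the lower sets passes to subsets. Only non-emptiness uses the
   cone: h0 - v 0 lies above h0, hence in H, and differs from h0 because positive independence
   forces v 0 to be nonzero. The degree drops because h0 itself is counted in d_H(h). *)

lemma nsmul_0 [simp]: "nsmul 0 x = 0"
  by (simp add: nsmul_def)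

lemma nsmul_Suc_0 [simp]: "nsmul (Suc 0) x = x"
  by (simp add: nsmul_def)

lemma sum_nsmul_indicator:
  fixes v :: "nat \<Rightarrow> 'a::ab_group_add"
  assumes "i < N"
  shows "(\<Sum>j<N. nsmul (if j = i then 1 else 0) (v j)) = v i"
proof -
  have "(\<Sum>j<N. nsmul (if j = i then 1 else 0) (v j)) = (\<Sum>j<N. if j = i then v j else 0)"
    by (rule sum.cong) simp_all
  also have "\<dots> = v i"
    using assms by simp
  finally show ?thesis .
qed

lemma generator_in_cone:
  assumes "i < N"
  shows "v i \<in> cone N v"
  unfolding cone_def mem_Collect_eq
  by (rule exI[of _ "\<lambda>j. if j = i then 1 else 0"]) (simp add: sum_nsmul_indicator[OF assms])

lemma pos_lin_indep_generator_nonzero: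
  assumes "pos_lin_indep N v" and "i < N"
  shows "v i \<noteq> 0"
proof
  assume "v i = 0"
  then have "(\<Sum>j<N. nsmul ((\<lambda>j. if j = i then 1 else 0) j) (v j)) = 0"
    using sum_nsmul_indicator[OF \<open>i < N\<close>, of v] by simp
  with assms show False
    unfolding pos_lin_indep_def by fastforce
qed

lemma lc_le_diff_cone:
  assumes "s \<in> cone N v"
  shows "lc_le N v h (h - s)"
  using assms by (simp add: lc_le_def)

lemma light_cone_regular_finite_below:
  assumes "light_cone_regular N v H" and "h \<in> H"
  shows "finite {h' \<in> H. lc_le N v h' h}"
  using assms unfolding light_cone_regular_def by blast

lemma light_cone_regular_upward:
  assumes "light_cone_regular N v H" and "h \<in> H" and "lc_le N v h h'"
  shows "h' \<in> H"
  using assms unfolding light_cone_regular_def by blast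

lemma light_cone_regular_Diff_singleton_nonempty:
  assumes "light_cone_regular N v H" and "pos_lin_indep N v" and "N \<ge> 1" and "h \<in> H"
  shows "H - {h} \<noteq> {}"
proof -
  have "0 < N"
    using \<open>N \<ge> 1\<close> by simp
  have "lc_le N v h (h - v 0)"
    using lc_le_diff_cone[OF generator_in_cone[OF \<open>0 < N\<close>]] .
  then have "h - v 0 \<in> H"
    using light_cone_regular_upward[OF assms(1,4)] by blast
  moreover have "h - v 0 \<noteq> h"
    using pos_lin_indep_generator_nonzero[OF assms(2) \<open>0 < N\<close>] by simp
  ultimately show ?thesis
    by blast
qed

lemma light_cone_regular_Diff_minimal:
  assumes reg: "light_cone_regular N v H" and "pos_lin_indep N v" and "N \<ge> 1"
    and "h\<^sub>0 \<in> H" and minimal: "\<forall>h\<in>H. lc_le N v h h\<^sub>0 \<longrightarrow> h = h\<^sub>0"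
  shows "light_cone_regular N v (H - {h\<^sub>0})"
proof -
  have "finite {h' \<in> H - {h\<^sub>0}. lc_le N v h' h}" if "h \<in> H - {h\<^sub>0}" for h
    using light_cone_regular_finite_below[OF reg, of h] that by (auto intro: rev_finite_subset)
  moreover have "h' \<in> H - {h\<^sub>0}" if "h \<in> H - {h\<^sub>0}" and "lc_le N v h h'" for h h'
    using light_cone_regular_upward[OF reg] minimal that by blast
  ultimately show ?thesis
    using light_cone_regular_Diff_singleton_nonempty[OF assms(1-4)]
    unfolding light_cone_regular_def by blast
qed

lemma dH_Diff_below_less:
  assumes "light_cone_regular N v H" and "h \<in> H" and "h\<^sub>0 \<in> H" and "lc_le N v h\<^sub>0 h"
  shows "dH N v (H - {h\<^sub>0}) h < dH N v H h"
proof -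
  have "{h' \<in> H - {h\<^sub>0}. lc_le N v h' h} = {h' \<in> H. lc_le N v h' h} - {h\<^sub>0}"
    by auto
  moreover have "h\<^sub>0 \<in> {h' \<in> H. lc_le N v h' h}"
    using assms(3,4) by simp
  ultimately show ?thesis
    unfolding dH_def by (metis card_Diff1_less light_cone_regular_finite_below[OF assms(1,2)])
qed

theorem lemma3p9:
  fixes N :: nat and v :: "nat \<Rightarrow> 'a::ab_group_add" and H :: "'a set" and h0 :: 'a
  assumes fg: "fin_gen_Z_module TYPE('a)"
    and N_pos: "N \<ge> 1"
    and dist: "inj_on v {..<N}"
    and indep: "pos_lin_indep N v"
    and reg: "light_cone_regular N v H"
    and h0_in: "h0 \<in> H"
    and h0_min: "\<forall>h\<in>H. lc_le N v h h0 \<longrightarrow> h = h0"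
  shows "light_cone_regular N v (H - {h0})
    \<and> (\<forall>h\<in>H. lc_le N v h0 h \<and> h0 \<noteq> h \<longrightarrow> dH N v (H - {h0}) h < dH N v H h)"
  using light_cone_regular_Diff_minimal[OF reg indep N_pos h0_in h0_min]
    dH_Diff_below_less[OF reg _ h0_in] by blast

end
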